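(* Let $X$ be a real Banach space with $\operatorname{dens} X = \kappa$. If $\operatorname{cf}(\kappa) \geq \mathfrak{c}^+$, then $X$ contains no overcomplete set.
   Context: $\operatorname{dens}$ denotes the density character, $\operatorname{cf}$ the cofinality, $\mathfrak{c}$ the cardinality of the continuum and $\mathfrak{c}^+$ its successor cardinal. A subset $S$ of a Banach space $X$ with $|S| = \operatorname{dens} X$ is called overcomplete if every subset $\Lambda \subseteq S$ with $|\Lambda| = |S|$ is linearly dense in $X$. *)

theory Defs
  imports "HOL-Analysis.Analysis"
begin

text \<open>Cardinals are represented by the well-orders card_of A (initial-ordinal-like
  well-orders on A) from HOL's BNF cardinal library; ordLeq / ordIso compare them.\<close>

text \<open>D realises the density character: D is dense and has least cardinality
  among all dense subsets. Then dens X = card_of D.\<close>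
definition dens_witness :: "'a::real_normed_vector set \<Rightarrow> bool" where
  "dens_witness D \<longleftrightarrow> closure D = UNIV \<and>
     (\<forall>D'::'a set. closure D' = UNIV \<longrightarrow> (card_of D, card_of D') \<in> ordLeq)"

definition overcomplete_set :: "'a::real_normed_vector set \<Rightarrow> bool" where
  "overcomplete_set S \<longleftrightarrow>
     (\<exists>D::'a set. dens_witness D \<and> (card_of S, card_of D) \<in> ordIso) \<and>
     (\<forall>L. L \<subseteq> S \<and> (card_of L, card_of S) \<in> ordIso \<longrightarrow> closure (span L) = UNIV)"

text \<open>B is a cofinal subset of the well-order r. The cofinality of r is the
  least cardinality of such a B.\<close>
definition cofinal_in :: "'b rel \<Rightarrow> 'b set \<Rightarrow> bool" where
  "cofinal_in r B \<longleftrightarrow> B \<subseteq> Field r \<and> (\<forall>a\<in>Field r. \<exists>b\<in>B. (a, b) \<in> r)"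

definition cf_geq :: "'b rel \<Rightarrow> 'c rel \<Rightarrow> bool" where
  "cf_geq r k \<longleftrightarrow> (\<forall>B. cofinal_in r B \<longrightarrow> (k, card_of B) \<in> ordLeq)"

end

theory Submission
  imports Defs
begin

text \<open>Let \<open>\<kappa> = dens X\<close> and suppose \<open>S\<close> is overcomplete, so \<open>|S| = \<kappa>\<close>.
  Since \<open>\<kappa> > |\<real>|\<close>, \<open>X\<close> is not a line, and the Hahn--Banach theorem yields continuous
  functionals \<open>f, g\<close> and vectors \<open>u, v\<close> with \<open>f u = 1\<close>, \<open>f v = 0\<close>, \<open>g v = 1\<close>.
  The map \<open>s \<mapsto> (f s, g s)\<close> sends \<open>S\<close> into a set of size \<open>|\<real>| < cf \<kappa>\<close>, so one of its
  fibres \<open>L\<close> still has size \<open>\<kappa>\<close>. But \<open>L \<subseteq> {f = a, g = b}\<close>, which lies in the kernel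
  of the nonzero functional \<open>f\<close> (if \<open>a = 0\<close>) or \<open>b f - a g\<close> (if \<open>a \<noteq> 0\<close>); so the span
  of \<open>L\<close> is not dense.\<close>

unbundle cardinal_syntax

section \<open>Fibres of maps on sets of large cofinality\<close>

lemma card_of_Times_same_ordLess_infinite:
  assumes A: "infinite A" and Z: "|Z| <o |A|"
  shows "|Z \<times> Z| <o |A|"
proof (cases "finite Z")
  case True
  then have "finite (Z \<times> Z)" by simp
  with A show ?thesis
    using finite_ordLess_infinite[OF card_of_Well_order card_of_Well_order]
    unfolding Field_card_of by blast
next
  case False
  then have "|Z \<times> Z| =o |Z|"
    by (rule card_of_Times_same_infinite)
  then show ?thesis
    using Z by (rule ordIso_ordLess_trans)
qed

lemma card_of_Times_ordLess_infinite:
  assumes A: "infinite A" and X: "|X| <o |A|" and Y: "|Y| <o |A|"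
  shows "|X \<times> Y| <o |A|"
proof (cases "|X| \<le>o |Y|")
  case True
  then have "|X \<times> Y| \<le>o |Y \<times> Y|"
    by (rule card_of_Times_mono1)
  then show ?thesis
    using card_of_Times_same_ordLess_infinite[OF A Y] by (rule ordLeq_ordLess_trans)
next
  case False
  then have "|Y| \<le>o |X|"
    using ordLeq_total[OF card_of_Well_order card_of_Well_order] by blast
  then have "|X \<times> Y| \<le>o |X \<times> X|"
    by (rule card_of_Times_mono2)
  then show ?thesis
    using card_of_Times_same_ordLess_infinite[OF A X] by (rule ordLeq_ordLess_trans)
qed

lemma card_of_wo_rel: "wo_rel (card_of A)"
  by (simp add: wo_rel_def card_of_Well_order)

lemma cofinal_in_card_of: "cofinal_in (card_of A) A"
  using wo_rel.REFL[OF card_of_wo_rel, of A]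
  unfolding cofinal_in_def Field_card_of by (blast dest: refl_onD)

lemma cf_geq_card_of_ordLeq: "cf_geq (card_of A) k \<Longrightarrow> k \<le>o |A|"
  using cofinal_in_card_of unfolding cf_geq_def by blast

lemma cf_geq_cardSuc_ordLess: "cf_geq (card_of A) (cardSuc k) \<Longrightarrow> Card_order k \<Longrightarrow> k <o |A|"
  using cardSuc_greater cf_geq_card_of_ordLeq by (blast intro: ordLess_ordLeq_trans)

lemma cf_geq_cardSuc_bounded:
  assumes cf: "cf_geq (card_of A) (cardSuc k)" and k: "Card_order k"
    and B: "B \<subseteq> A" "|B| \<le>o k"
  shows "\<exists>d\<in>A. B \<subseteq> underS (card_of A) d"
proof -
  have "\<not> cofinal_in (card_of A) B"
  proof
    assume "cofinal_in (card_of A) B"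
    then have "cardSuc k \<le>o |B|"
      using cf unfolding cf_geq_def by blast
    then have "cardSuc k \<le>o k"
      using B(2) by (rule ordLeq_transitive)
    then show False
      using cardSuc_greater[OF k] not_ordLess_ordLeq by blast
  qed
  then obtain d where d: "d \<in> A" and not_below: "\<forall>b\<in>B. (d, b) \<notin> card_of A"
    using B(1) unfolding cofinal_in_def Field_card_of by blast
  have "b \<in> underS (card_of A) d" if "b \<in> B" for b
  proof -
    have "(d, b) \<in> card_of A \<or> (b, d) \<in> card_of A"
      using wo_rel.TOTALS[OF card_of_wo_rel, of A] d that B(1) unfolding Field_card_of by blast
    moreover have "(d, d) \<in> card_of A"
      using wo_rel.REFL[OF card_of_wo_rel, of A] d unfolding Field_card_of by (blast dest: refl_onD)
    ultimately show ?thesis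
      using not_below that unfolding underS_def by auto
  qed
  then show ?thesis
    using d by blast
qed

lemma ordLess_card_of_ordLeq_underS:
  assumes "|B| <o |A|"
  shows "\<exists>a\<in>A. |B| \<le>o card_of (underS (card_of A) a)"
proof -
  from assms obtain a where a: "a \<in> A" "|B| =o Restr (card_of A) (underS (card_of A) a)"
    unfolding ordLess_iff_ordIso_Restr[OF card_of_Well_order card_of_Well_order] Field_card_of
    by blast
  have "|B| \<le>o card_of (Field (Restr (card_of A) (underS (card_of A) a)))"
    using card_of_mono2[OF ordIso_imp_ordLeq[OF a(2)]] unfolding Field_card_of .
  also have "card_of (Field (Restr (card_of A) (underS (card_of A) a))) \<le>o card_of (underS (card_of A) a)"
    by (rule card_of_mono1[OF Field_Restr_subset])
  finally show ?thesis
    using a(1) by blast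
qed

lemma cf_geq_cardSuc_uniform_underS:
  assumes cf: "cf_geq (card_of A) (cardSuc k)" and k: "Card_order k" and I: "|I| \<le>o k"
    and small: "\<And>i. i \<in> I \<Longrightarrow> |B i| <o |A|"
  shows "\<exists>d\<in>A. \<forall>i\<in>I. |B i| \<le>o card_of (underS (card_of A) d)"
proof -
  have "\<forall>i\<in>I. \<exists>a\<in>A. |B i| \<le>o card_of (underS (card_of A) a)"
    using small ordLess_card_of_ordLeq_underS by blast
  then obtain a where a: "\<And>i. i \<in> I \<Longrightarrow> a i \<in> A"
    and B_le: "\<And>i. i \<in> I \<Longrightarrow> |B i| \<le>o card_of (underS (card_of A) (a i))"
    by (metis bchoice)
  have "|a ` I| \<le>o k"
    using card_of_image I by (rule ordLeq_transitive)
  moreover have "a ` I \<subseteq> A"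
    using a by blast
  ultimately obtain d where "d \<in> A" and d: "a ` I \<subseteq> underS (card_of A) d"
    using cf_geq_cardSuc_bounded[OF cf k] by blast
  have "|B i| \<le>o card_of (underS (card_of A) d)" if "i \<in> I" for i
  proof -
    have "(a i, d) \<in> card_of A"
      using d that unfolding underS_def by blast
    then have "underS (card_of A) (a i) \<subseteq> underS (card_of A) d"
      by (rule underS_incr[OF wo_rel.TRANS[OF card_of_wo_rel] wo_rel.ANTISYM[OF card_of_wo_rel]])
    then show ?thesis
      using B_le[OF that] card_of_mono1 ordLeq_transitive by blast
  qed
  then show ?thesis
    using \<open>d \<in> A\<close> by blast
qed

text \<open>If all fibres were smaller than \<open>|A|\<close>, they would all fit into one initial segment
  \<open>U\<close> of \<open>|A|\<close>, and \<open>T\<close> would inject into \<open>I \<times> U\<close>, a set of size \<open>< |A|\<close>.\<close>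
lemma cf_geq_cardSuc_fiber_ordIso:
  assumes cf: "cf_geq (card_of A) (cardSuc k)" and k: "Card_order k"
    and I: "infinite I" "|I| \<le>o k" and T: "|T| =o |A|" and F: "F ` T \<subseteq> I"
  shows "\<exists>i\<in>I. |{t\<in>T. F t = i}| =o |T|"
proof (rule ccontr)
  assume no_large: "\<not> ?thesis"
  have "|{t\<in>T. F t = i}| <o |A|" if "i \<in> I" for i
  proof -
    have "|{t\<in>T. F t = i}| \<le>o |T|"
      by (rule card_of_mono1) blast
    then have "|{t\<in>T. F t = i}| <o |T|"
      using no_large that ordLeq_iff_ordLess_or_ordIso by blast
    then show ?thesis
      using T by (rule ordLess_ordIso_trans)
  qed
  then obtain d where "d \<in> A" and U: "\<forall>i\<in>I. |{t\<in>T. F t = i}| \<le>o card_of (underS (card_of A) d)"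
    using cf_geq_cardSuc_uniform_underS[OF cf k I(2), where B = "\<lambda>i. {t\<in>T. F t = i}"] by blast
  define U where "U = underS (card_of A) d"
  have "|SIGMA i:I. {t\<in>T. F t = i}| \<le>o |I \<times> U|"
    using U unfolding U_def by (rule card_of_Sigma_mono1)
  moreover have "T = (\<Union>i\<in>I. {t\<in>T. F t = i})"
    using F by blast
  then have "|T| \<le>o |SIGMA i:I. {t\<in>T. F t = i}|"
    using card_of_UNION_Sigma by metis
  moreover have "|I \<times> U| <o |A|"
  proof (rule card_of_Times_ordLess_infinite)
    have "k <o |A|"
      using cf k by (rule cf_geq_cardSuc_ordLess)
    then show "|I| <o |A|"
      using I(2) by (rule ordLeq_ordLess_trans[rotated])
    then show "infinite A"
      using I(1) card_of_ordLeq_finite ordLess_imp_ordLeq by blast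
    show "|U| <o |A|"
      unfolding U_def using card_of_underS[OF card_of_Card_order, of d A] \<open>d \<in> A\<close>
      unfolding Field_card_of by blast
  qed
  ultimately have "|T| <o |A|"
    using ordLeq_transitive ordLeq_ordLess_trans by blast
  then show False
    using T not_ordLess_ordIso by blast
qed

section \<open>The Hahn--Banach theorem for real normed spaces\<close>

text \<open>A partial linear functional is represented by its graph, a subspace of
  \<open>X \<times> \<real>\<close>; domination by \<open>C * norm\<close> already forces the graph to be single-valued.\<close>
definition dominated_graph :: "real \<Rightarrow> ('a::real_normed_vector \<times> real) set \<Rightarrow> bool" where
  "dominated_graph C G \<longleftrightarrow> subspace G \<and> (\<forall>(x, a) \<in> G. a \<le> C * norm x)"

lemma dominated_graph_abs:
  assumes G: "dominated_graph C G" and xa: "(x, a) \<in> G"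
  shows "\<bar>a\<bar> \<le> C * norm x"
proof -
  have "(-x, -a) \<in> G"
    using subspace_neg[OF _ xa] G unfolding dominated_graph_def by simp
  then have "a \<le> C * norm x" "-a \<le> C * norm x"
    using xa G unfolding dominated_graph_def by auto
  then show ?thesis by linarith
qed

lemma dominated_graph_unique:
  assumes G: "dominated_graph C G" and "(x, a) \<in> G" "(x, b) \<in> G"
  shows "a = b"
proof -
  have "(0, a - b) \<in> G"
    using subspace_diff[of G "(x, a)" "(x, b)"] assms unfolding dominated_graph_def by simp
  then show ?thesis
    using dominated_graph_abs[OF G] by fastforce
qed

lemma dominated_graph_chain_Union:
  assumes Ch: "Ch \<in> chains {G. dominated_graph C G}" and "Ch \<noteq> {}"
  shows "dominated_graph C (\<Union>Ch)"
proof -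
  have graphs: "dominated_graph C G" if "G \<in> Ch" for G
    using chainsD2[OF Ch] that by blast
  have common: "\<exists>G\<in>Ch. p \<in> G \<and> q \<in> G" if "p \<in> \<Union>Ch" "q \<in> \<Union>Ch" for p q
    using that chainsD[OF Ch] by blast
  have "subspace (\<Union>Ch)"
    unfolding subspace_def
  proof (intro conjI ballI allI)
    show "0 \<in> \<Union>Ch"
      using \<open>Ch \<noteq> {}\<close> graphs subspace_0 unfolding dominated_graph_def by blast
    show "p + q \<in> \<Union>Ch" if "p \<in> \<Union>Ch" "q \<in> \<Union>Ch" for p q
      using common[OF that] graphs subspace_add unfolding dominated_graph_def by blast
    show "c *\<^sub>R p \<in> \<Union>Ch" if "p \<in> \<Union>Ch" for c p
      using that graphs subspace_mul unfolding dominated_graph_def by blast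
  qed
  then show ?thesis
    using graphs unfolding dominated_graph_def by blast
qed

text \<open>The value \<open>s\<close> of the extension at \<open>x\<^sub>0\<close> must lie between \<open>b - C * norm (y - x\<^sub>0)\<close>
  and \<open>C * norm (z + x\<^sub>0) - c\<close> for all \<open>(y, b), (z, c) \<in> M\<close>; by the triangle inequality the
  supremum of the lower bounds works.\<close>
lemma dominated_graph_extension_value:
  assumes M: "dominated_graph C M" and C: "C \<ge> 0"
  shows "\<exists>s. (\<forall>(y, b) \<in> M. b - C * norm (y - x\<^sub>0) \<le> s) \<and> (\<forall>(z, c) \<in> M. s \<le> C * norm (z + x\<^sub>0) - c)"
proof -
  have sub: "subspace M" and dom: "\<And>y b. (y, b) \<in> M \<Longrightarrow> b \<le> C * norm y"
    using M unfolding dominated_graph_def by auto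
  have gap: "b - C * norm (y - x\<^sub>0) \<le> C * norm (z + x\<^sub>0) - c" if "(y, b) \<in> M" "(z, c) \<in> M" for y b z c
  proof -
    have "b + c \<le> C * norm (y + z)"
      using dom subspace_add[OF sub that] by simp
    also have "\<dots> \<le> C * (norm (y - x\<^sub>0) + norm (z + x\<^sub>0))"
      using norm_triangle_ineq[of "y - x\<^sub>0" "z + x\<^sub>0"] C by (simp add: mult_left_mono)
    finally show ?thesis by (simp add: algebra_simps)
  qed
  define s where "s = (SUP p\<in>M. snd p - C * norm (fst p - x\<^sub>0))"
  have "(0, 0) \<in> M"
    using subspace_0[OF sub] by (simp add: zero_prod_def)
  then have "bdd_above ((\<lambda>p. snd p - C * norm (fst p - x\<^sub>0)) ` M)"
    using gap by (intro bdd_aboveI2[where M = "C * norm x\<^sub>0"]) fastforce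
  then have "b - C * norm (y - x\<^sub>0) \<le> s" if "(y, b) \<in> M" for y b
    unfolding s_def using that by (intro cSUP_upper2[where x="(y, b)"]) auto
  moreover have "s \<le> C * norm (z + x\<^sub>0) - c" if "(z, c) \<in> M" for z c
    unfolding s_def using gap that \<open>(0, 0) \<in> M\<close> by (intro cSUP_least) auto
  ultimately show ?thesis
    by blast
qed

lemma dominated_graph_extension_bound:
  assumes M: "dominated_graph C M" and yb: "(y, b) \<in> M"
    and lower: "\<forall>(y, b) \<in> M. b - C * norm (y - x\<^sub>0) \<le> s"
    and upper: "\<forall>(z, c) \<in> M. s \<le> C * norm (z + x\<^sub>0) - c"
  shows "b + t * s \<le> C * norm (y + t *\<^sub>R x\<^sub>0)"
proof -
  have "subspace M"
    using M unfolding dominated_graph_def by blast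
  then have scaled: "(r *\<^sub>R y, r * b) \<in> M" for r
    using subspace_mul[OF _ yb, of r] by simp
  consider "t < 0" | "t = 0" | "t > 0"
    by linarith
  then show ?thesis
  proof cases
    case 1
    have "b / (-t) - C * norm ((1 / (-t)) *\<^sub>R y - x\<^sub>0) \<le> s"
      using lower scaled[of "1 / (-t)"] by auto
    moreover have "y + t *\<^sub>R x\<^sub>0 = (-t) *\<^sub>R ((1 / (-t)) *\<^sub>R y - x\<^sub>0)"
      using 1 by (simp add: algebra_simps)
    then have "norm (y + t *\<^sub>R x\<^sub>0) = (-t) * norm ((1 / (-t)) *\<^sub>R y - x\<^sub>0)"
      using 1 by simp
    ultimately show ?thesis
      using 1 by (simp add: field_simps)
  next
    case 2
    then show ?thesis
      using M yb unfolding dominated_graph_def by auto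
  next
    case 3
    have "s \<le> C * norm ((1 / t) *\<^sub>R y + x\<^sub>0) - b / t"
      using upper scaled[of "1 / t"] by auto
    moreover have "y + t *\<^sub>R x\<^sub>0 = t *\<^sub>R ((1 / t) *\<^sub>R y + x\<^sub>0)"
      using 3 by (simp add: algebra_simps)
    then have "norm (y + t *\<^sub>R x\<^sub>0) = t * norm ((1 / t) *\<^sub>R y + x\<^sub>0)"
      using 3 by simp
    ultimately show ?thesis
      using 3 by (simp add: field_simps)
  qed
qed

lemma dominated_graph_extend:
  assumes M: "dominated_graph C M" and C: "C \<ge> 0"
  shows "\<exists>M'. dominated_graph C M' \<and> M \<subseteq> M' \<and> x\<^sub>0 \<in> Domain M'"
proof -
  obtain s where s: "\<forall>(y, b) \<in> M. b - C * norm (y - x\<^sub>0) \<le> s"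
    "\<forall>(z, c) \<in> M. s \<le> C * norm (z + x\<^sub>0) - c"
    using dominated_graph_extension_value[OF M C, of x\<^sub>0] by blast
  note extended_dom = dominated_graph_extension_bound[OF M _ s]
  have sub: "subspace M"
    using M unfolding dominated_graph_def by blast
  define M' where "M' = {p + q | p q. p \<in> M \<and> q \<in> span {(x\<^sub>0, s)}}"
  have sum_in: "p + q \<in> M'" if "p \<in> M" "q \<in> span {(x\<^sub>0, s)}" for p q
    unfolding M'_def using that by blast
  have "subspace M'"
    unfolding M'_def using sub subspace_span by (rule subspace_sums)
  moreover have "a \<le> C * norm x" if xa: "(x, a) \<in> M'" for x a
  proof -
    obtain p t where "p \<in> M" "(x, a) = p + t *\<^sub>R (x\<^sub>0, s)"
      using xa unfolding M'_def span_singleton by blast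
    then show ?thesis
      using extended_dom[of "fst p" "snd p" t] by (cases p) simp
  qed
  moreover have "M \<subseteq> M'"
    using sum_in[OF _ span_zero] by force
  moreover have "(x\<^sub>0, s) \<in> M'"
    using sum_in[OF subspace_0[OF sub] span_base] by simp
  ultimately show ?thesis
    unfolding dominated_graph_def by auto
qed

lemma dominated_graph_total_imp_bounded_linear:
  assumes G: "dominated_graph C G" and total: "Domain G = UNIV"
  shows "\<exists>f. bounded_linear f \<and> (\<forall>(x, a) \<in> G. f x = a)"
proof -
  define f where "f x = (THE a. (x, a) \<in> G)" for x
  have f_eq: "f x = a" if "(x, a) \<in> G" for x a
    unfolding f_def using that dominated_graph_unique[OF G] by blast
  have graph: "(x, f x) \<in> G" for x
    using total f_eq by (metis Domain_iff UNIV_I)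
  have sub: "subspace G"
    using G unfolding dominated_graph_def by blast
  have "bounded_linear f"
  proof (rule bounded_linear_intro[where K = C])
    show "f (x + y) = f x + f y" for x y
      using f_eq subspace_add[OF sub graph graph] by simp
    show "f (r *\<^sub>R x) = r *\<^sub>R f x" for r x
      using f_eq subspace_mul[OF sub graph, of r] by simp
    show "norm (f x) \<le> norm x * C" for x
      using dominated_graph_abs[OF G graph] by (simp add: mult.commute)
  qed
  then show ?thesis
    using f_eq by blast
qed

theorem hahn_banach_dominated_graph:
  assumes G\<^sub>0: "dominated_graph C G\<^sub>0" and C: "C \<ge> 0"
  shows "\<exists>f. bounded_linear f \<and> (\<forall>(x, a) \<in> G\<^sub>0. f x = a)"
proof -
  define \<G> where "\<G> = {G. dominated_graph C G \<and> G\<^sub>0 \<subseteq> G}"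
  have "\<exists>U\<in>\<G>. \<forall>G\<in>Ch. G \<subseteq> U" if Ch: "Ch \<in> chains \<G>" for Ch
  proof (cases "Ch = {}")
    case True
    then show ?thesis using G\<^sub>0 unfolding \<G>_def by blast
  next
    case False
    have "Ch \<in> chains {G. dominated_graph C G}"
      using Ch unfolding chains_def \<G>_def by blast
    then have "dominated_graph C (\<Union>Ch)"
      using False by (rule dominated_graph_chain_Union)
    moreover have "G\<^sub>0 \<subseteq> \<Union>Ch"
      using False chainsD2[OF Ch] unfolding \<G>_def by blast
    ultimately have "\<Union>Ch \<in> \<G>"
      unfolding \<G>_def by blast
    then show ?thesis by blast
  qed
  then obtain M where "M \<in> \<G>" and maximal: "\<forall>G\<in>\<G>. M \<subseteq> G \<longrightarrow> G = M"
    using Zorn_Lemma2[of \<G>] by blast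
  then have M: "dominated_graph C M" and "G\<^sub>0 \<subseteq> M"
    unfolding \<G>_def by auto
  have "x\<^sub>0 \<in> Domain M" for x\<^sub>0
  proof -
    obtain M' where M': "dominated_graph C M'" "M \<subseteq> M'" "x\<^sub>0 \<in> Domain M'"
      using dominated_graph_extend[OF M C] by blast
    then have "M' \<in> \<G>"
      using \<open>G\<^sub>0 \<subseteq> M\<close> unfolding \<G>_def by blast
    then have "M' = M"
      using maximal \<open>M \<subseteq> M'\<close> by blast
    then show ?thesis
      using M'(3) by simp
  qed
  then have "Domain M = UNIV" by auto
  then obtain f where "bounded_linear f" "\<forall>(x, a) \<in> M. f x = a"
    using dominated_graph_total_imp_bounded_linear[OF M] by blast
  then have "bounded_linear f \<and> (\<forall>(x, a) \<in> G\<^sub>0. f x = a)"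
    using \<open>G\<^sub>0 \<subseteq> M\<close> by auto
  then show ?thesis by (rule exI[where x = f])
qed

lemma bounded_linear_functional_exists:
  fixes w :: "'a::real_normed_vector"
  assumes "w \<noteq> 0"
  shows "\<exists>f::'a \<Rightarrow> real. bounded_linear f \<and> f w = 1"
proof -
  have "a \<le> 1 / norm w * norm x" if xa: "(x, a) \<in> span {(w, 1)}" for x a
  proof -
    obtain t where "(x, a) = t *\<^sub>R (w, 1)"
      using xa unfolding span_singleton by blast
    then have "x = t *\<^sub>R w" "a = t" by simp_all
    then show ?thesis using assms by simp
  qed
  then have "dominated_graph (1 / norm w) (span {(w, 1)})"
    unfolding dominated_graph_def using subspace_span by blast
  moreover have "1 / norm w \<ge> 0" by simp
  ultimately obtain f :: "'a \<Rightarrow> real"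
    where "bounded_linear f" and f: "\<forall>(x, a) \<in> span {(w, 1)}. f x = a"
    by (blast dest: hahn_banach_dominated_graph)
  moreover have "(w, 1) \<in> span {(w, 1::real)}"
    by (rule span_base) simp
  ultimately show ?thesis by auto
qed

lemma dens_witness_ordIso:
  fixes D D' :: "'a::real_normed_vector set"
  assumes "dens_witness D" "dens_witness D'"
  shows "|D| =o |D'|"
proof -
  have "|D| \<le>o |D'|"
    using assms unfolding dens_witness_def by blast
  moreover have "|D'| \<le>o |D|"
    using assms unfolding dens_witness_def by blast
  ultimately show ?thesis
    unfolding ordIso_iff_ordLeq by blast
qed

lemma overcomplete_set_ordIso_dens_witness:
  fixes S D :: "'a::real_normed_vector set"
  assumes "overcomplete_set S" "dens_witness D"
  shows "|S| =o |D|"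
  using assms dens_witness_ordIso ordIso_transitive unfolding overcomplete_set_def by blast

lemma overcomplete_set_closure_span:
  assumes "overcomplete_set S" "L \<subseteq> S" "|L| =o |S|"
  shows "closure (span L) = UNIV"
  using assms unfolding overcomplete_set_def by blast

lemma range_scaleR_neq_UNIV:
  fixes D :: "'a::real_vector set"
  assumes "|UNIV :: real set| <o |D|"
  shows "range (\<lambda>t. t *\<^sub>R u) \<noteq> (UNIV :: 'a set)"
proof
  assume "range (\<lambda>t. t *\<^sub>R u) = (UNIV :: 'a set)"
  then have "|UNIV :: 'a set| \<le>o |UNIV :: real set|"
    using card_of_image[of "\<lambda>t. t *\<^sub>R u" "UNIV :: real set"] by simp
  then have "|D| \<le>o |UNIV :: real set|"
    using card_of_mono1[OF subset_UNIV] by (rule ordLeq_transitive[rotated])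
  then show False
    using assms not_ordLess_ordLeq by blast
qed

lemma independent_bounded_linear_functionals:
  assumes not_line: "\<And>u::'a::real_normed_vector. range (\<lambda>t. t *\<^sub>R u) \<noteq> UNIV"
  shows "\<exists>(f::'a \<Rightarrow> real) (g::'a \<Rightarrow> real) u v.
    bounded_linear f \<and> bounded_linear g \<and> f u = 1 \<and> f v = 0 \<and> g v = 1"
proof -
  obtain u :: 'a where "u \<noteq> 0"
    using not_line[of 0] by auto
  then obtain f :: "'a \<Rightarrow> real" where f: "bounded_linear f" "f u = 1"
    using bounded_linear_functional_exists by blast
  obtain w where w: "w \<notin> range (\<lambda>t. t *\<^sub>R u)"
    using not_line[of u] by blast
  define v where "v = w - f w *\<^sub>R u"
  have "v \<noteq> 0"
    using w unfolding v_def by auto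
  then obtain g :: "'a \<Rightarrow> real" where g: "bounded_linear g" "g v = 1"
    using bounded_linear_functional_exists by blast
  have "f v = 0"
    unfolding v_def using f
    by (simp add: linear_diff[OF bounded_linear.linear] linear_scale[OF bounded_linear.linear])
  with f g show ?thesis
    by blast
qed

lemma bounded_linear_functional_vanishing_on_level_set:
  fixes f g :: "'a::real_normed_vector \<Rightarrow> real"
  assumes f: "bounded_linear f" "f u = 1" "f v = 0" and g: "bounded_linear g" "g v = 1"
  shows "\<exists>(h::'a \<Rightarrow> real) z. bounded_linear h \<and> h z \<noteq> 0 \<and> (\<forall>x. f x = a \<and> g x = b \<longrightarrow> h x = 0)"
proof (cases "a = 0")
  case True
  then have "bounded_linear f \<and> f u \<noteq> 0 \<and> (\<forall>x. f x = a \<and> g x = b \<longrightarrow> f x = 0)"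
    using f by simp
  then show ?thesis by blast
next
  case False
  define h where "h x = b * f x - a * g x" for x
  have "bounded_linear h"
    unfolding h_def
    by (intro bounded_linear_sub bounded_linear_compose[OF bounded_linear_mult_right] f(1) g(1))
  moreover have "h v \<noteq> 0" and "\<forall>x. f x = a \<and> g x = b \<longrightarrow> h x = 0"
    using False f g unfolding h_def by simp_all
  ultimately show ?thesis by blast
qed

lemma bounded_linear_zero_on_closure_span:
  assumes h: "bounded_linear h" and L: "\<forall>x\<in>L. h x = 0" and x: "x \<in> closure (span L)"
  shows "h x = 0"
proof -
  have "span L \<subseteq> {x. h x = 0}"
    using L by (intro span_minimal linear_subspace_kernel bounded_linear.linear[OF h]) auto
  moreover have "closed {x. h x = 0}"
    using h by (intro closed_Collect_eq continuous_intros) (simp add: linear_continuous_on)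
  ultimately have "closure (span L) \<subseteq> {x. h x = 0}"
    by (rule closure_minimal)
  then show ?thesis
    using x by blast
qed

theorem theorem3p9:
  fixes D :: "'a::banach set"
  assumes "dens_witness D"
    and "cf_geq (card_of D) (cardSuc (card_of (UNIV :: real set)))"
  shows "\<not> (\<exists>S::'a set. overcomplete_set S)"
proof
  assume "\<exists>S::'a set. overcomplete_set S"
  then obtain S :: "'a set" where S: "overcomplete_set S" ..
  then have SD: "|S| =o |D|"
    using assms(1) by (rule overcomplete_set_ordIso_dens_witness)
  have "|UNIV :: real set| <o |D|"
    using assms(2) card_of_Card_order by (rule cf_geq_cardSuc_ordLess)
  then have "range (\<lambda>t. t *\<^sub>R u) \<noteq> (UNIV :: 'a set)" for u
    by (rule range_scaleR_neq_UNIV)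
  then obtain f g :: "'a \<Rightarrow> real" and u v
    where f: "bounded_linear f" "f u = 1" "f v = 0" and g: "bounded_linear g" "g v = 1"
    using independent_bounded_linear_functionals by blast
  have "|UNIV :: (real \<times> real) set| \<le>o |UNIV :: real set|"
    using ordIso_imp_ordLeq[OF card_of_Times_same_infinite[OF infinite_UNIV_char_0]]
    by (simp only: UNIV_Times_UNIV)
  then obtain a b where "|{s\<in>S. (f s, g s) = (a, b)}| =o |S|"
    using cf_geq_cardSuc_fiber_ordIso[OF assms(2) card_of_Card_order _ _ SD, of UNIV "\<lambda>s. (f s, g s)"]
    by (auto simp: infinite_UNIV_char_0 finite_prod)
  then have dense: "closure (span {s\<in>S. (f s, g s) = (a, b)}) = UNIV"
    by (intro overcomplete_set_closure_span[OF S]) auto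
  obtain h :: "'a \<Rightarrow> real" and z
    where "bounded_linear h" "h z \<noteq> 0" "\<forall>x. f x = a \<and> g x = b \<longrightarrow> h x = 0"
    using bounded_linear_functional_vanishing_on_level_set[OF f g, where a = a and b = b] by blast
  then show False
    using bounded_linear_zero_on_closure_span[of h "{s\<in>S. (f s, g s) = (a, b)}" z] dense by auto
qed

end
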